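(* Let $M$ be a smooth manifold and let $C\subseteq C'\subseteq TM$ be two conal structures on $M$. Then the identity map of $M$ is reflectively spacelike-proper as a map from $(M,C')$ to $(M,C)$, and reflectively timelike-proper as a map from $(M,C)$ to $(M,C')$.
   Context: A conal structure on $M$ is an open subset $C\subset TM$ such that each $C_x=C\cap T_xM$ is an open convex cone containing no affine line. Write $x\ll_C y$ if there is a smooth curve from $x$ to $y$ with all tangent vectors in $C$; $I^\pm_C(K)$ denotes the chronological future/past of $K\subseteq M$, $\bar I^\pm_C(K)$ its closure, and $\bar I_C(K)=\bar I^+_C(K)\cup\bar I^-_C(K)$. A closed set $S$ is $C$-spacelike compact if $S\subseteq\bar I_C(K)$ for some compact $K$, and $C$-timelike compact if $S\cap\bar I^+_C(K)$ and $S\cap\bar I^-_C(K)$ are compact for every compact $K$. A smooth map $f:(M,C_1)\to(N,C_2)$ is reflectively spacelike-proper if the preimage of every $C_2$-spacelike compact set is $C_1$-spacelike compact, and reflectively timelike-proper if the preimage of every $C_2$-timelike compact set is $C_1$-timelike compact. *)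

theory Defs
  imports "HOL-Analysis.Analysis"
begin

type_synonym ('a, 'e) chart = "'a set \<times> ('a \<Rightarrow> 'e)"

fun Ck :: "nat \<Rightarrow> ('a::real_normed_vector \<Rightarrow> 'b::real_normed_vector) \<Rightarrow> 'a set \<Rightarrow> bool" where
  "Ck 0 f S = continuous_on S f"
| "Ck (Suc k) f S =
     (f differentiable_on S \<and> (\<forall>v. Ck k (\<lambda>x. frechet_derivative f (at x) v) S))"

definition smooth_on :: "'a::real_normed_vector set \<Rightarrow> ('a \<Rightarrow> 'b::real_normed_vector) \<Rightarrow> bool" where
  "smooth_on S f \<longleftrightarrow> (\<forall>k. Ck k f S)"

definition is_chart :: "('a::topological_space, 'e::euclidean_space) chart \<Rightarrow> bool" where
  "is_chart c \<longleftrightarrow> (case c of (U, \<phi>) \<Rightarrow>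
     open U \<and> open (\<phi> ` U) \<and> inj_on \<phi> U \<and> continuous_on U \<phi> \<and>
     continuous_on (\<phi> ` U) (inv_into U \<phi>))"

definition smooth_manifold ::
  "('a::{t2_space, second_countable_topology}, 'e::euclidean_space) chart set \<Rightarrow> bool" where
  "smooth_manifold A \<longleftrightarrow>
     (\<forall>c\<in>A. is_chart c) \<and> \<Union>(fst ` A) = UNIV \<and>
     (\<forall>(U, \<phi>)\<in>A. \<forall>(V, \<psi>)\<in>A. smooth_on (\<phi> ` (U \<inter> V)) (\<psi> \<circ> inv_into U \<phi>))"

text \<open>Tangent vectors are represented by triples (x, c, v): point x, chart c at x, and the
  coordinate vector v. The coordinate change from chart c to chart d at x:\<close>
definition chart_change ::
  "('a, 'e::euclidean_space) chart \<Rightarrow> ('a, 'e) chart \<Rightarrow> 'a \<Rightarrow> 'e \<Rightarrow> 'e" where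
  "chart_change c d x v =
     frechet_derivative (snd d \<circ> inv_into (fst c) (snd c)) (at (snd c x)) v"

definition open_cone_no_line :: "'e::euclidean_space set \<Rightarrow> bool" where
  "open_cone_no_line K \<longleftrightarrow>
     open K \<and> convex K \<and> (\<forall>v\<in>K. \<forall>t::real. t > 0 \<longrightarrow> t *\<^sub>R v \<in> K) \<and>
     \<not> (\<exists>p d. d \<noteq> 0 \<and> (\<forall>t::real. p + t *\<^sub>R d \<in> K))"

text \<open>A conal structure: a subset of TM (a chart-change-saturated set of representatives),
  open in TM (i.e. open in every bundle chart phi(U) x 'e), whose fibres are open convex cones
  containing no affine line.\<close>
definition conal_structure ::
  "('a::{t2_space, second_countable_topology}, 'e::euclidean_space) chart set
   \<Rightarrow> ('a \<times> ('a, 'e) chart \<times> 'e) set \<Rightarrow> bool" where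
  "conal_structure A C \<longleftrightarrow>
     (\<forall>x c v. (x, c, v) \<in> C \<longrightarrow> c \<in> A \<and> x \<in> fst c) \<and>
     (\<forall>x c v d. (x, c, v) \<in> C \<and> d \<in> A \<and> x \<in> fst d \<longrightarrow> (x, d, chart_change c d x v) \<in> C) \<and>
     (\<forall>c\<in>A. open {(snd c x, v) | x v. (x, c, v) \<in> C}) \<and>
     (\<forall>c\<in>A. \<forall>x\<in>fst c. open_cone_no_line {v. (x, c, v) \<in> C})"

definition smooth_curve ::
  "('a::topological_space, 'e::euclidean_space) chart set \<Rightarrow> real set \<Rightarrow> (real \<Rightarrow> 'a) \<Rightarrow> bool" where
  "smooth_curve A I \<gamma> \<longleftrightarrow> continuous_on I \<gamma> \<and>
     (\<forall>(U, \<phi>)\<in>A. smooth_on (I \<inter> \<gamma> -` U) (\<phi> \<circ> \<gamma>))"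

definition chron ::
  "('a::topological_space, 'e::euclidean_space) chart set \<Rightarrow> ('a \<times> ('a, 'e) chart \<times> 'e) set
   \<Rightarrow> 'a \<Rightarrow> 'a \<Rightarrow> bool" where
  "chron A C x y \<longleftrightarrow> (\<exists>a b s t \<gamma>. a < s \<and> s < t \<and> t < b \<and> smooth_curve A {a<..<b} \<gamma> \<and>
     \<gamma> s = x \<and> \<gamma> t = y \<and>
     (\<forall>r\<in>{s..t}. \<forall>c\<in>A. \<gamma> r \<in> fst c \<longrightarrow>
        (\<gamma> r, c, vector_derivative (snd c \<circ> \<gamma>) (at r)) \<in> C))"

definition I_plus where "I_plus A C K = {y. \<exists>x\<in>K. chron A C x y}"
definition I_minus where "I_minus A C K = {y. \<exists>x\<in>K. chron A C y x}"

definition spacelike_compact where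
  "spacelike_compact A C S \<longleftrightarrow> closed S \<and>
     (\<exists>K. compact K \<and> S \<subseteq> closure (I_plus A C K) \<union> closure (I_minus A C K))"

definition timelike_compact where
  "timelike_compact A C S \<longleftrightarrow> closed S \<and>
     (\<forall>K. compact K \<longrightarrow> compact (S \<inter> closure (I_plus A C K)) \<and>
                          compact (S \<inter> closure (I_minus A C K)))"

definition smooth_map ::
  "('a::topological_space, 'e::euclidean_space) chart set \<Rightarrow> ('b::topological_space, 'f::euclidean_space) chart set
   \<Rightarrow> ('a \<Rightarrow> 'b) \<Rightarrow> bool" where
  "smooth_map A B f \<longleftrightarrow> continuous_on UNIV f \<and>
     (\<forall>(U, \<phi>)\<in>A. \<forall>(V, \<psi>)\<in>B. smooth_on (\<phi> ` (U \<inter> f -` V)) (\<psi> \<circ> f \<circ> inv_into U \<phi>))"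

definition refl_spacelike_proper where
  "refl_spacelike_proper A C1 B C2 f \<longleftrightarrow> smooth_map A B f \<and>
     (\<forall>S. spacelike_compact B C2 S \<longrightarrow> spacelike_compact A C1 (f -` S))"

definition refl_timelike_proper where
  "refl_timelike_proper A C1 B C2 f \<longleftrightarrow> smooth_map A B f \<and>
     (\<forall>S. timelike_compact B C2 S \<longrightarrow> timelike_compact A C1 (f -` S))"

end

theory Submission
  imports Defs
begin

text \<open>Enlarging the cone field only adds admissible curves, so chronological futures and pasts
  grow. Hence a set lying in the causal hull of a compact set for the smaller structure lies in it
  for the larger one, and a closed set meeting the larger hulls compactly meets the smaller,
  closed, hulls in closed subsets of those compact sets.\<close>

lemma chron_mono: "C \<subseteq> C' \<Longrightarrow> chron A C x y \<Longrightarrow> chron A C' x y"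
  unfolding chron_def by blast

lemma I_plus_mono: "C \<subseteq> C' \<Longrightarrow> I_plus A C K \<subseteq> I_plus A C' K"
  unfolding I_plus_def using chron_mono by blast

lemma I_minus_mono: "C \<subseteq> C' \<Longrightarrow> I_minus A C K \<subseteq> I_minus A C' K"
  unfolding I_minus_def using chron_mono by blast

lemma compact_Int_closed_subset:
  assumes "compact (S \<inter> Y)" and "X \<subseteq> Y" and "closed X"
  shows "compact (S \<inter> X)"
proof -
  have "S \<inter> X = (S \<inter> Y) \<inter> X" using \<open>X \<subseteq> Y\<close> by blast
  then show ?thesis using assms compact_Int_closed by metis
qed

lemma spacelike_compact_mono:
  assumes "C \<subseteq> C'" and "spacelike_compact A C S"
  shows "spacelike_compact A C' S"
proof -
  obtain K where "closed S" "compact K"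
    and "S \<subseteq> closure (I_plus A C K) \<union> closure (I_minus A C K)"
    using assms(2) unfolding spacelike_compact_def by blast
  moreover have "closure (I_plus A C K) \<subseteq> closure (I_plus A C' K)"
    by (rule closure_mono[OF I_plus_mono[OF assms(1)]])
  moreover have "closure (I_minus A C K) \<subseteq> closure (I_minus A C' K)"
    by (rule closure_mono[OF I_minus_mono[OF assms(1)]])
  ultimately show ?thesis
    unfolding spacelike_compact_def by blast
qed

lemma timelike_compact_antimono:
  assumes "C \<subseteq> C'" and "timelike_compact A C' S"
  shows "timelike_compact A C S"
  unfolding timelike_compact_def
proof (intro conjI allI impI)
  show "closed S" using assms(2) unfolding timelike_compact_def by blast
next
  fix K :: "'a set" assume "compact K"
  then have "compact (S \<inter> closure (I_plus A C' K))" "compact (S \<inter> closure (I_minus A C' K))"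
    using assms(2) unfolding timelike_compact_def by blast+
  then show "compact (S \<inter> closure (I_plus A C K))" "compact (S \<inter> closure (I_minus A C K))"
    using compact_Int_closed_subset closure_mono I_plus_mono I_minus_mono assms(1) closed_closure
    by metis+
qed

lemma smooth_map_id: "smooth_manifold A \<Longrightarrow> smooth_map A A id"
  unfolding smooth_map_def smooth_manifold_def by (auto simp: comp_def)

theorem lemma1:
  fixes A :: "('a::{t2_space, second_countable_topology}, 'e::euclidean_space) chart set"
    and C C' :: "('a \<times> ('a, 'e) chart \<times> 'e) set"
  assumes "smooth_manifold A"
    and "conal_structure A C" and "conal_structure A C'"
    and "C \<subseteq> C'"
  shows "refl_spacelike_proper A C' A C id \<and> refl_timelike_proper A C A C' id"
  using smooth_map_id[OF assms(1)]
    spacelike_compact_mono[OF assms(4)] timelike_compact_antimono[OF assms(4)]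
  unfolding refl_spacelike_proper_def refl_timelike_proper_def by simp

end
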